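(* Let $G$ be a diamond-free graph and $S$ a degree-greedy stable set in $G$. Then $G$ is edge simplicial if and only if the multigraph $G_S$ equals $G-S$ (same vertex set and same multiset of edges; in particular $G_S$ has no repeated edges).
   Context: A vertex $v$ is simplicial if $N[v]$ is a clique; a clique is simplicial if it equals $N[v]$ for a simplicial vertex $v$. $G$ is edge simplicial if every edge is contained in a simplicial clique. For a linear order $\sigma=(v_1,\dots,v_n)$ of $V(G)$, the $\sigma$-greedy stable set is obtained by scanning $v_1,\dots,v_n$ in order, starting with $S=\emptyset$, and adding $v_i$ to $S$ whenever $S\cup\{v_i\}$ is stable; a degree-greedy stable set is a $\sigma$-greedy stable set for an order with $d_G(v_i)\le d_G(v_j)$ for $i<j$. For a stable set $S$, $G_S$ is the multigraph with vertex set $V(G)\setminus S$ and edge multiset $\biguplus_{v\in S}\{xy: x\ne y,\ x,y\in N_G(v)\}$ (multiset union, one copy per $v$). The diamond is $K_4$ minus one edge; diamond-free means no induced diamond. *)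

theory Defs
  imports Main "HOL-Library.Multiset"
begin

definition graph :: "'a set \<Rightarrow> 'a set set \<Rightarrow> bool" where
  "graph V E \<longleftrightarrow> finite V \<and> (\<forall>e\<in>E. \<exists>x y. x \<noteq> y \<and> x \<in> V \<and> y \<in> V \<and> e = {x, y})"

definition adj :: "'a set set \<Rightarrow> 'a \<Rightarrow> 'a \<Rightarrow> bool" where
  "adj E x y \<longleftrightarrow> x \<noteq> y \<and> {x, y} \<in> E"

definition nbhd :: "'a set \<Rightarrow> 'a set set \<Rightarrow> 'a \<Rightarrow> 'a set" where
  "nbhd V E v = {u \<in> V. adj E v u}"

definition cnbhd :: "'a set \<Rightarrow> 'a set set \<Rightarrow> 'a \<Rightarrow> 'a set" where
  "cnbhd V E v = insert v (nbhd V E v)"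

definition degree :: "'a set \<Rightarrow> 'a set set \<Rightarrow> 'a \<Rightarrow> nat" where
  "degree V E v = card (nbhd V E v)"

definition clique :: "'a set set \<Rightarrow> 'a set \<Rightarrow> bool" where
  "clique E C \<longleftrightarrow> (\<forall>x\<in>C. \<forall>y\<in>C. x \<noteq> y \<longrightarrow> adj E x y)"

definition stable :: "'a set set \<Rightarrow> 'a set \<Rightarrow> bool" where
  "stable E S \<longleftrightarrow> (\<forall>x\<in>S. \<forall>y\<in>S. \<not> adj E x y)"

definition simplicial_vertex :: "'a set \<Rightarrow> 'a set set \<Rightarrow> 'a \<Rightarrow> bool" where
  "simplicial_vertex V E v \<longleftrightarrow> v \<in> V \<and> clique E (cnbhd V E v)"

definition simplicial_clique :: "'a set \<Rightarrow> 'a set set \<Rightarrow> 'a set \<Rightarrow> bool" where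
  "simplicial_clique V E C \<longleftrightarrow> (\<exists>v. simplicial_vertex V E v \<and> C = cnbhd V E v)"

definition edge_simplicial :: "'a set \<Rightarrow> 'a set set \<Rightarrow> bool" where
  "edge_simplicial V E \<longleftrightarrow> (\<forall>e\<in>E. \<exists>C. simplicial_clique V E C \<and> e \<subseteq> C)"

definition diamond_free :: "'a set \<Rightarrow> 'a set set \<Rightarrow> bool" where
  "diamond_free V E \<longleftrightarrow> \<not> (\<exists>a\<in>V. \<exists>b\<in>V. \<exists>c\<in>V. \<exists>d\<in>V. distinct [a, b, c, d] \<and>
      adj E a b \<and> adj E a c \<and> adj E a d \<and> adj E b c \<and> adj E b d \<and> \<not> adj E c d)"

fun greedy_aux :: "'a set set \<Rightarrow> 'a set \<Rightarrow> 'a list \<Rightarrow> 'a set" where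
  "greedy_aux E S [] = S"
| "greedy_aux E S (v # vs) =
     greedy_aux E (if stable E (insert v S) then insert v S else S) vs"

definition greedy_stable :: "'a set set \<Rightarrow> 'a list \<Rightarrow> 'a set" where
  "greedy_stable E \<sigma> = greedy_aux E {} \<sigma>"

definition degree_greedy_stable :: "'a set \<Rightarrow> 'a set set \<Rightarrow> 'a set \<Rightarrow> bool" where
  "degree_greedy_stable V E S \<longleftrightarrow> (\<exists>\<sigma>. distinct \<sigma> \<and> set \<sigma> = V \<and>
      sorted_wrt (\<lambda>u w. degree V E u \<le> degree V E w) \<sigma> \<and> S = greedy_stable E \<sigma>)"

text \<open>Edge multiset of the multigraph G_S (vertex set V - S).\<close>
definition GS_edges :: "'a set \<Rightarrow> 'a set set \<Rightarrow> 'a set \<Rightarrow> 'a set multiset" where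
  "GS_edges V E S = (\<Sum>v\<in>S. mset_set {{x, y} | x y. x \<noteq> y \<and> x \<in> nbhd V E v \<and> y \<in> nbhd V E v})"

definition del_edges :: "'a set \<Rightarrow> 'a set set \<Rightarrow> 'a set \<Rightarrow> 'a set multiset" where
  "del_edges V E S = mset_set {e \<in> E. e \<inter> S = {}}"

end

theory Submission
  imports Defs
begin

text \<open>
  The edge {x, y} occurs in G_S once for every v \<in> S adjacent to both x and y. Hence, for a
  stable S, G_S = G - S says exactly that every vertex of S is simplicial and every edge of G - S
  has exactly one common neighbour in S.

  If G is edge simplicial, the degree order makes every v \<in> S simplicial: otherwise v has
  non-adjacent neighbours x, y, and the edge vx lies in a simplicial clique N[w] that is a proper
  subset of N[v] (it misses y). So w has smaller degree than v and is scanned before v; then w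
  itself, or a neighbour of w chosen earlier, enters S, and that vertex lies in N[v],
  contradicting stability. An edge of G - S lies in a simplicial clique N[w], which meets the
  maximal stable set S; that vertex is a common neighbour in S of both ends. It is unique because
  an edge with two non-adjacent common neighbours spans a diamond. Conversely, under the
  condition every edge lies in N[v] for some simplicial v \<in> S.
\<close>

lemma adj_sym: "adj E x y \<longleftrightarrow> adj E y x"
  by (auto simp: adj_def insert_commute)

lemma adj_irrefl [simp]: "\<not> adj E x x"
  by (simp add: adj_def)

lemma graph_edgeE:
  assumes "graph V E" "e \<in> E"
  obtains x y where "x \<noteq> y" "x \<in> V" "y \<in> V" "e = {x, y}"
  using assms by (auto simp: graph_def)

lemma graph_adj_in_vertices:
  assumes "graph V E" "adj E x y"
  shows "x \<in> V" "y \<in> V"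
  using assms by (auto simp: graph_def adj_def doubleton_eq_iff)

lemma card_cnbhd:
  assumes "finite V"
  shows "card (cnbhd V E v) = Suc (degree V E v)"
proof -
  have "finite (nbhd V E v)" "v \<notin> nbhd V E v"
    using assms by (auto simp: nbhd_def)
  then show ?thesis by (simp add: cnbhd_def degree_def)
qed

lemma degree_less_if_cnbhd_psubset:
  assumes "finite V" "cnbhd V E w \<subset> cnbhd V E v"
  shows "degree V E w < degree V E v"
proof -
  have "finite (cnbhd V E v)" using assms(1) by (simp add: cnbhd_def nbhd_def)
  then have "card (cnbhd V E w) < card (cnbhd V E v)" using assms(2) by (rule psubset_card_mono)
  then show ?thesis by (simp add: card_cnbhd[OF assms(1)])
qed

lemma simplicial_vertex_iff_clique_nbhd:
  "simplicial_vertex V E v \<longleftrightarrow> v \<in> V \<and> clique E (nbhd V E v)"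
  by (auto simp: simplicial_vertex_def clique_def cnbhd_def nbhd_def adj_sym)

lemma simplicial_cnbhd_subset:
  assumes "simplicial_vertex V E w" "v \<in> cnbhd V E w"
  shows "cnbhd V E w \<subseteq> cnbhd V E v"
proof
  fix z assume z: "z \<in> cnbhd V E w"
  have "w \<in> V" "clique E (cnbhd V E w)" using assms(1) by (auto simp: simplicial_vertex_def)
  then have "z \<in> V" and "z \<noteq> v \<longrightarrow> adj E v z"
    using z assms(2) by (auto simp: clique_def cnbhd_def nbhd_def)
  then show "z \<in> cnbhd V E v" by (auto simp: cnbhd_def nbhd_def)
qed

lemma stable_cnbhd_eq:
  assumes "stable E S" "v \<in> S" "u \<in> S" "u \<in> cnbhd V E v"
  shows "u = v"
  using assms by (auto simp: stable_def cnbhd_def nbhd_def)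

lemma diamond_free_adj_if_common_edge:
  assumes "diamond_free V E" "adj E x y" "v \<in> V" "w \<in> V" "v \<noteq> w"
    and "{x, y} \<subseteq> nbhd V E v" "{x, y} \<subseteq> nbhd V E w"
  shows "adj E v w"
proof (rule ccontr)
  assume "\<not> adj E v w"
  moreover have "x \<in> V" "y \<in> V" "adj E x v" "adj E y v" "adj E x w" "adj E y w"
    using assms(6,7) by (auto simp: nbhd_def adj_sym)
  moreover have "distinct [x, y, v, w]"
    using calculation assms(2,5) by auto
  ultimately show False
    using assms(1-4) unfolding diamond_free_def by blast
qed

lemma greedy_aux_append: "greedy_aux E S (xs @ ys) = greedy_aux E (greedy_aux E S xs) ys"
  by (induction xs arbitrary: S) auto

lemma greedy_aux_mono: "S \<subseteq> greedy_aux E S vs"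
proof (induction vs arbitrary: S)
  case (Cons v vs)
  have "S \<subseteq> (if stable E (insert v S) then insert v S else S)" by auto
  then show ?case using Cons.IH[of "if stable E (insert v S) then insert v S else S"] by simp
qed simp

lemma greedy_aux_subset: "greedy_aux E S vs \<subseteq> S \<union> set vs"
proof (induction vs arbitrary: S)
  case (Cons v vs)
  have "greedy_aux E S (v # vs) \<subseteq> (if stable E (insert v S) then insert v S else S) \<union> set vs"
    using Cons.IH by simp
  then show ?case by (auto split: if_splits)
qed simp

lemma stable_greedy_aux: "stable E S \<Longrightarrow> stable E (greedy_aux E S vs)"
  by (induction vs arbitrary: S) simp_all

lemma adj_if_not_stable_insert:
  assumes "stable E T" "\<not> stable E (insert w T)"
  shows "\<exists>u\<in>T. adj E u w"
proof -
  obtain a b where "a \<in> insert w T" "b \<in> insert w T" "adj E a b"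
    using assms(2) unfolding stable_def by blast
  moreover have "\<not> (a \<in> T \<and> b \<in> T)"
    using assms(1) \<open>adj E a b\<close> unfolding stable_def by blast
  ultimately show ?thesis by (auto simp: adj_sym)
qed

lemma greedy_stable_dominates:
  assumes "w \<notin> greedy_stable E (pre @ w # post)"
  shows "\<exists>u\<in>greedy_stable E (pre @ w # post). u \<in> set pre \<and> adj E u w"
proof -
  define T where "T = greedy_aux E {} pre"
  have T: "stable E T" "T \<subseteq> set pre"
    using stable_greedy_aux[of E "{}" pre] greedy_aux_subset[of E "{}" pre]
    by (auto simp: T_def stable_def)
  have result: "greedy_stable E (pre @ w # post)
      = greedy_aux E (if stable E (insert w T) then insert w T else T) post"
    by (simp add: greedy_stable_def greedy_aux_append T_def)
  have rejected: "\<not> stable E (insert w T)"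
    using assms greedy_aux_mono[of "insert w T" E post] result by auto
  with T(1) obtain u where "u \<in> T" "adj E u w" by (metis adj_if_not_stable_insert)
  moreover have "u \<in> greedy_stable E (pre @ w # post)"
    using \<open>u \<in> T\<close> rejected greedy_aux_mono[of T E post] result by auto
  ultimately show ?thesis using T(2) by auto
qed

lemma degree_greedy_stable_subset: "degree_greedy_stable V E S \<Longrightarrow> S \<subseteq> V"
  using greedy_aux_subset[of E "{}"] by (auto simp: degree_greedy_stable_def greedy_stable_def)

lemma stable_degree_greedy_stable: "degree_greedy_stable V E S \<Longrightarrow> stable E S"
  using stable_greedy_aux[of E "{}"]
  by (auto simp: degree_greedy_stable_def greedy_stable_def stable_def)

lemma degree_greedy_stable_dominates:
  assumes "degree_greedy_stable V E S" "w \<in> V" "w \<notin> S"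
  shows "\<exists>u\<in>S. adj E u w \<and> degree V E u \<le> degree V E w"
proof -
  obtain \<sigma> where \<sigma>: "set \<sigma> = V" "sorted_wrt (\<lambda>u w. degree V E u \<le> degree V E w) \<sigma>"
    "S = greedy_stable E \<sigma>"
    using assms(1) unfolding degree_greedy_stable_def by blast
  then obtain pre post where split: "\<sigma> = pre @ w # post"
    using assms(2) by (meson split_list)
  then obtain u where "u \<in> S" "u \<in> set pre" "adj E u w"
    using greedy_stable_dominates[of w E pre post] assms(3) \<sigma>(3) by auto
  moreover have "degree V E u \<le> degree V E w"
    using \<sigma>(2) split \<open>u \<in> set pre\<close> by (simp add: sorted_wrt_append)
  ultimately show ?thesis by blast
qed

lemma degree_greedy_stable_simplicial:
  assumes "graph V E" "edge_simplicial V E" "degree_greedy_stable V E S" "v \<in> S"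
  shows "simplicial_vertex V E v"
proof -
  have "finite V" using assms(1) by (simp add: graph_def)
  have "stable E S" using assms(3) by (rule stable_degree_greedy_stable)
  have "v \<in> V" using assms(3,4) degree_greedy_stable_subset by blast
  have "clique E (nbhd V E v)"
    unfolding clique_def
  proof (intro ballI impI)
    fix x y assume x: "x \<in> nbhd V E v" and y: "y \<in> nbhd V E v" and "x \<noteq> y"
    show "adj E x y"
    proof (rule ccontr)
      assume "\<not> adj E x y"
      have "{v, x} \<in> E" using x by (auto simp: nbhd_def adj_def)
      then obtain w where w: "simplicial_vertex V E w" "{v, x} \<subseteq> cnbhd V E w"
        using assms(2) by (auto simp: edge_simplicial_def simplicial_clique_def)
      have sub: "cnbhd V E w \<subseteq> cnbhd V E v"
        using w by (simp add: simplicial_cnbhd_subset)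
      have "y \<notin> cnbhd V E w"
        using w \<open>x \<noteq> y\<close> \<open>\<not> adj E x y\<close> by (auto simp: simplicial_vertex_def clique_def)
      then have "cnbhd V E w \<subset> cnbhd V E v" using sub y by (auto simp: cnbhd_def)
      then have less: "degree V E w < degree V E v"
        using \<open>finite V\<close> by (simp add: degree_less_if_cnbhd_psubset)
      have "w \<in> cnbhd V E w" by (simp add: cnbhd_def)
      then have "w \<notin> S"
        using sub stable_cnbhd_eq[OF \<open>stable E S\<close> assms(4)] less by blast
      then obtain u where u: "u \<in> S" "adj E u w" "degree V E u \<le> degree V E w"
        using degree_greedy_stable_dominates[OF assms(3)] w(1)
        by (auto simp: simplicial_vertex_def)
      have "u \<in> cnbhd V E w"
        using u(2) graph_adj_in_vertices[OF assms(1) u(2)] by (auto simp: cnbhd_def nbhd_def adj_sym)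
      then have "u = v" using sub stable_cnbhd_eq[OF \<open>stable E S\<close> assms(4) u(1)] by blast
      then show False using less u(3) by simp
    qed
  qed
  then show ?thesis using \<open>v \<in> V\<close> by (simp add: simplicial_vertex_iff_clique_nbhd)
qed

lemma edge_simplicial_nbhd_cover:
  assumes "graph V E" "edge_simplicial V E" "\<And>w. w \<in> V \<Longrightarrow> w \<notin> S \<Longrightarrow> \<exists>u\<in>S. adj E u w"
    and "e \<in> E" "e \<inter> S = {}"
  shows "\<exists>v\<in>S. e \<subseteq> nbhd V E v"
proof -
  obtain w where w: "simplicial_vertex V E w" "e \<subseteq> cnbhd V E w"
    using assms(2,4) by (auto simp: edge_simplicial_def simplicial_clique_def)
  have "\<exists>v\<in>S. v \<in> cnbhd V E w"
  proof (cases "w \<in> S")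
    case False
    then obtain u where "u \<in> S" "adj E u w"
      using assms(3) w(1) by (auto simp: simplicial_vertex_def)
    have "u \<in> V" using graph_adj_in_vertices(1)[OF assms(1) \<open>adj E u w\<close>] .
    with \<open>adj E u w\<close> have "u \<in> cnbhd V E w" by (simp add: cnbhd_def nbhd_def adj_sym)
    with \<open>u \<in> S\<close> show ?thesis by blast
  qed (auto simp: cnbhd_def)
  then obtain v where v: "v \<in> S" "v \<in> cnbhd V E w" by blast
  have "e \<subseteq> cnbhd V E v"
    using w(2) simplicial_cnbhd_subset[OF w(1) v(2)] by (rule subset_trans)
  moreover have "v \<notin> e" using v(1) assms(5) by blast
  ultimately have "e \<subseteq> nbhd V E v" by (auto simp: cnbhd_def)
  with v(1) show ?thesis by blast
qed

lemma edge_simplicial_if_nbhd_cover: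
  assumes "graph V E" "\<forall>v\<in>S. simplicial_vertex V E v"
    and "\<forall>e\<in>E. e \<inter> S = {} \<longrightarrow> (\<exists>v\<in>S. e \<subseteq> nbhd V E v)"
  shows "edge_simplicial V E"
  unfolding edge_simplicial_def
proof
  fix e assume "e \<in> E"
  then obtain x y where xy: "x \<noteq> y" "x \<in> V" "y \<in> V" "e = {x, y}"
    using assms(1) graph_edgeE by blast
  have "adj E x y" using \<open>e \<in> E\<close> xy by (simp add: adj_def)
  have "\<exists>v\<in>S. e \<subseteq> cnbhd V E v"
  proof (cases "e \<inter> S = {}")
    case True
    then obtain v where "v \<in> S" "e \<subseteq> nbhd V E v" using assms(3) \<open>e \<in> E\<close> by blast
    then show ?thesis by (auto simp: cnbhd_def)
  next
    case False
    have "e \<subseteq> cnbhd V E x" "e \<subseteq> cnbhd V E y"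
      using xy \<open>adj E x y\<close> adj_sym[of E x y] by (auto simp: cnbhd_def nbhd_def)
    moreover have "x \<in> S \<or> y \<in> S" using False xy(4) by blast
    ultimately show ?thesis by blast
  qed
  then show "\<exists>C. simplicial_clique V E C \<and> e \<subseteq> C"
    using assms(2) by (auto simp: simplicial_clique_def)
qed

lemma card_Collect_eq_1_iff_Ex1: "card {x\<in>A. P x} = 1 \<longleftrightarrow> (\<exists>!x\<in>A. P x)"
  unfolding One_nat_def card_1_singleton_iff by (auto simp: Ex1_def)

definition nbhd_pairs :: "'a set \<Rightarrow> 'a set set \<Rightarrow> 'a \<Rightarrow> 'a set set" where
  "nbhd_pairs V E v = {{x, y} | x y. x \<noteq> y \<and> x \<in> nbhd V E v \<and> y \<in> nbhd V E v}"

lemma finite_nbhd_pairs: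
  assumes "finite V"
  shows "finite (nbhd_pairs V E v)"
proof (rule finite_subset)
  show "nbhd_pairs V E v \<subseteq> Pow V" by (auto simp: nbhd_pairs_def nbhd_def)
qed (use assms in simp)

lemma count_GS_edges:
  assumes "finite V" "finite S"
  shows "count (GS_edges V E S) e = card {v\<in>S. e \<in> nbhd_pairs V E v}"
proof -
  have "count (GS_edges V E S) e = (\<Sum>v\<in>S. if e \<in> nbhd_pairs V E v then 1 else 0)"
    using finite_nbhd_pairs[OF assms(1)]
    by (simp add: GS_edges_def flip: nbhd_pairs_def add: count_sum count_mset_set')
  also have "\<dots> = card {v\<in>S. e \<in> nbhd_pairs V E v}"
    using assms(2) by (simp add: sum.If_cases Int_def)
  finally show ?thesis .
qed

lemma count_del_edges:
  assumes "graph V E"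
  shows "count (del_edges V E S) e = (if e \<in> E \<and> e \<inter> S = {} then 1 else 0)"
proof -
  have "finite E"
    using assms by (auto simp: graph_def intro: finite_subset[of E "Pow V"])
  then show ?thesis by (simp add: del_edges_def)
qed

lemma edge_in_nbhd_pairs_iff:
  assumes "graph V E" "e \<in> E"
  shows "e \<in> nbhd_pairs V E v \<longleftrightarrow> e \<subseteq> nbhd V E v"
proof -
  obtain x y where "x \<noteq> y" "e = {x, y}" using graph_edgeE[OF assms] by blast
  then show ?thesis by (auto simp: nbhd_pairs_def doubleton_eq_iff)
qed

lemma edge_if_in_nbhd_pairs:
  assumes "simplicial_vertex V E v" "e \<in> nbhd_pairs V E v"
  shows "e \<in> E"
  using assms by (auto simp: nbhd_pairs_def simplicial_vertex_iff_clique_nbhd clique_def adj_def)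

lemma nbhd_pairs_disjoint_stable:
  assumes "stable E S" "v \<in> S" "e \<in> nbhd_pairs V E v"
  shows "e \<inter> S = {}"
  using assms by (auto simp: nbhd_pairs_def nbhd_def stable_def)

definition nbhd_clique_partition :: "'a set \<Rightarrow> 'a set set \<Rightarrow> 'a set \<Rightarrow> bool" where
  "nbhd_clique_partition V E S \<longleftrightarrow> (\<forall>v\<in>S. simplicial_vertex V E v) \<and>
    (\<forall>e\<in>E. e \<inter> S = {} \<longrightarrow> (\<exists>!v\<in>S. e \<subseteq> nbhd V E v))"

lemma GS_edges_eq_del_edges_iff:
  assumes "graph V E" "stable E S" "S \<subseteq> V"
  shows "GS_edges V E S = del_edges V E S \<longleftrightarrow> nbhd_clique_partition V E S"
proof -
  have "finite V" using assms(1) by (simp add: graph_def)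
  then have "finite S" using assms(3) by (rule finite_subset[rotated])
  define covers where "covers e = {v\<in>S. e \<in> nbhd_pairs V E v}" for e
  have "GS_edges V E S = del_edges V E S \<longleftrightarrow>
      (\<forall>e. card (covers e) = (if e \<in> E \<and> e \<inter> S = {} then 1 else 0))"
    using \<open>finite V\<close> \<open>finite S\<close>
    by (simp add: multiset_eq_iff count_GS_edges count_del_edges[OF assms(1)] covers_def)
  also have "\<dots> \<longleftrightarrow> nbhd_clique_partition V E S"
    unfolding nbhd_clique_partition_def
  proof
    assume count: "\<forall>e. card (covers e) = (if e \<in> E \<and> e \<inter> S = {} then 1 else 0)"
    have "simplicial_vertex V E v" if "v \<in> S" for v
    proof -
      have "clique E (nbhd V E v)"
        unfolding clique_def
      proof (intro ballI impI)
        fix x y assume "x \<in> nbhd V E v" "y \<in> nbhd V E v" "x \<noteq> y"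
        then have "v \<in> covers {x, y}" using \<open>v \<in> S\<close> by (auto simp: covers_def nbhd_pairs_def)
        then have "card (covers {x, y}) \<noteq> 0" using \<open>finite S\<close> by (auto simp: covers_def)
        then have "{x, y} \<in> E" using count by (metis (full_types))
        then show "adj E x y" using \<open>x \<noteq> y\<close> by (simp add: adj_def)
      qed
      then show ?thesis using that assms(3) by (auto simp: simplicial_vertex_iff_clique_nbhd)
    qed
    moreover have "\<exists>!v\<in>S. e \<subseteq> nbhd V E v" if "e \<in> E" "e \<inter> S = {}" for e
    proof -
      have "card (covers e) = 1" using count that by simp
      then have "\<exists>!v\<in>S. e \<in> nbhd_pairs V E v"
        unfolding covers_def card_Collect_eq_1_iff_Ex1 .
      then show ?thesis by (simp add: edge_in_nbhd_pairs_iff[OF assms(1) that(1)])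
    qed
    ultimately show "(\<forall>v\<in>S. simplicial_vertex V E v) \<and>
        (\<forall>e\<in>E. e \<inter> S = {} \<longrightarrow> (\<exists>!v\<in>S. e \<subseteq> nbhd V E v))" by blast
  next
    assume cover: "(\<forall>v\<in>S. simplicial_vertex V E v) \<and>
      (\<forall>e\<in>E. e \<inter> S = {} \<longrightarrow> (\<exists>!v\<in>S. e \<subseteq> nbhd V E v))"
    show "\<forall>e. card (covers e) = (if e \<in> E \<and> e \<inter> S = {} then 1 else 0)"
    proof
      fix e
      show "card (covers e) = (if e \<in> E \<and> e \<inter> S = {} then 1 else 0)"
      proof (cases "e \<in> E \<and> e \<inter> S = {}")
        case True
        then have "\<exists>!v\<in>S. e \<in> nbhd_pairs V E v"
          using cover by (simp add: edge_in_nbhd_pairs_iff[OF assms(1)])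
        then have "card (covers e) = 1" unfolding covers_def card_Collect_eq_1_iff_Ex1 .
        then show ?thesis using True by simp
      next
        case False
        have "e \<notin> nbhd_pairs V E v" if "v \<in> S" for v
        proof
          assume pair: "e \<in> nbhd_pairs V E v"
          have "simplicial_vertex V E v" using cover that by simp
          then have "e \<in> E" using pair by (rule edge_if_in_nbhd_pairs)
          moreover have "e \<inter> S = {}" using pair by (rule nbhd_pairs_disjoint_stable[OF assms(2) that])
          ultimately show False using False by simp
        qed
        then have "covers e = {}" by (auto simp: covers_def)
        then show ?thesis using False by simp
      qed
    qed
  qed
  finally show ?thesis .
qed

lemma edge_simplicial_iff_nbhd_clique_partition:
  assumes "graph V E" "diamond_free V E" "degree_greedy_stable V E S"
  shows "edge_simplicial V E \<longleftrightarrow> nbhd_clique_partition V E S"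
  unfolding nbhd_clique_partition_def
proof
  assume edge_simplicial: "edge_simplicial V E"
  have "S \<subseteq> V" "stable E S"
    using assms(3) by (simp_all add: degree_greedy_stable_subset stable_degree_greedy_stable)
  have dominating: "\<exists>u\<in>S. adj E u w" if "w \<in> V" "w \<notin> S" for w
    using degree_greedy_stable_dominates[OF assms(3) that] by blast
  have "\<exists>!v\<in>S. e \<subseteq> nbhd V E v" if e: "e \<in> E" "e \<inter> S = {}" for e
  proof -
    obtain v where v: "v \<in> S" "e \<subseteq> nbhd V E v"
      using edge_simplicial_nbhd_cover[OF assms(1) edge_simplicial dominating e] by blast
    moreover have unique: "w = v" if w: "w \<in> S" "e \<subseteq> nbhd V E w" for w
    proof (rule ccontr)
      assume "w \<noteq> v"
      obtain x y where "x \<noteq> y" "e = {x, y}" using graph_edgeE[OF assms(1) \<open>e \<in> E\<close>] by blast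
      then have "adj E x y" using \<open>e \<in> E\<close> by (simp add: adj_def)
      moreover have "w \<in> V" "v \<in> V" using \<open>S \<subseteq> V\<close> v(1) w(1) by auto
      ultimately have "adj E w v"
        using diamond_free_adj_if_common_edge[OF assms(2)] \<open>w \<noteq> v\<close> v(2) w(2) \<open>e = {x, y}\<close>
        by simp
      then show False using \<open>stable E S\<close> v(1) w(1) by (simp add: stable_def)
    qed
    ultimately show ?thesis by (intro ex1I[of _ v]) (simp_all add: unique)
  qed
  then show "(\<forall>v\<in>S. simplicial_vertex V E v) \<and> (\<forall>e\<in>E. e \<inter> S = {} \<longrightarrow> (\<exists>!v\<in>S. e \<subseteq> nbhd V E v))"
    using degree_greedy_stable_simplicial[OF assms(1) edge_simplicial assms(3)] by simp
next
  assume cover: "(\<forall>v\<in>S. simplicial_vertex V E v) \<and> (\<forall>e\<in>E. e \<inter> S = {} \<longrightarrow> (\<exists>!v\<in>S. e \<subseteq> nbhd V E v))"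
  then have "\<forall>e\<in>E. e \<inter> S = {} \<longrightarrow> (\<exists>v\<in>S. e \<subseteq> nbhd V E v)" by (metis (no_types, lifting))
  then show "edge_simplicial V E"
    by (rule edge_simplicial_if_nbhd_cover[OF assms(1) conjunct1[OF cover]])
qed

theorem lemma10:
  fixes V :: "'a set" and E :: "'a set set" and S :: "'a set"
  assumes "graph V E"
    and "diamond_free V E"
    and "degree_greedy_stable V E S"
  shows "edge_simplicial V E \<longleftrightarrow> GS_edges V E S = del_edges V E S"
proof -
  have "stable E S" "S \<subseteq> V"
    using assms(3) by (simp_all add: stable_degree_greedy_stable degree_greedy_stable_subset)
  then show ?thesis
    using edge_simplicial_iff_nbhd_clique_partition[OF assms] GS_edges_eq_del_edges_iff[OF assms(1)]
    by simp
qed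

end
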